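(* Let $\mathcal L:\mathbb F^{q\times q}\to\mathbb F^{n\times n}$ be $*$-linear with matricization $L=[L_{ij}]$ and Choi matrix $\mathbb L$, and $m=\operatorname{rank}\mathbb L$. (a) For all $A_1,\ldots,A_m\in\mathbb F^{n\times q}$ with $\operatorname{span}\{A_1,\ldots,A_m\}=\operatorname{span}\{L_{ij}:1\le i\le n,1\le j\le q\}$, $\mathcal L$ admits a minimal Hill representation $\mathcal L(V)=\sum_{k,l=1}^m\mathbb H_{kl}A_lVA_k^*$ with some Hermitian $\mathbb H\in\mathbb F^{m\times m}$. More precisely: let $\lambda^{ij}_k$ be the unique scalars with $L_{ij}=\sum_{k=1}^m\lambda^{ij}_kA_k$ and let $L_k\in\mathbb F^{n\times q}$ have $(i,j)$ entry $\overline{\lambda^{ij}_k}$; then $L_1,\ldots,L_m$ span $\operatorname{span}\{L_{ij}\}$, the construction below applied to $L_1,\ldots,L_m$ returns exactly $A_1,\ldots,A_m$, the Hill matrix $\mathbb H=\mathbb H(\mathcal L;L_1,\ldots,L_m)$ gives such a representation, and $$\begin{bmatrix}L_1\\ \vdots\\ L_m\end{bmatrix}=(\mathbb H\otimes I_n)\begin{bmatrix}A_1\\ \vdots\\ A_m\end{bmatrix}.$$ (b) Conversely, if $\mathcal L(V)=\sum_{k,l=1}^m\mathbb H_{kl}A_lVA_k^*$ is a minimal Hill representation, then $\operatorname{span}\{A_1,\ldots,A_m\}=\operatorname{span}\{L_{ij}\}$.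
   Context: $\mathbb F\in\{\mathbb R,\mathbb C\}$; $\otimes$ Kronecker, $\circ$ Hadamard, $\vec{\mathbf 1}_p$ all-ones vector, $\overline X$ conjugate. Matricization $L\in\mathbb F^{n^2\times q^2}$ with $L\operatorname{vec}(V)=\operatorname{vec}(\mathcal L(V))$ (column-stacking), blocks $L_{ij}\in\mathbb F^{n\times q}$, $1\le i\le n$, $1\le j\le q$; Choi matrix $\mathbb L=[\mathcal L(\mathcal E^{(q)}_{ij})]_{i,j=1}^q$; $*$-linear: $\mathcal L(V^* )=\mathcal L(V)^*$. Hill representation: $\mathcal L(V)=\sum_{k,l=1}^m\mathbb H_{kl}A_lVA_k^*$ for all $V$; minimal if $m$ is smallest possible. Construction: for $L_1,\ldots,L_m$ spanning $\operatorname{span}\{L_{ij}\}$, let $L_{ij}=\sum_k\alpha^{ij}_kL_k$ (unique), $L_k=\sum_{i,j}\beta^k_{ij}L_{ij}$ (any choice); $A_k$ has $(i,j)$ entry $\overline{\alpha^{ij}_k}$, $B_k$ has $(i,j)$ entry $\beta^k_{ij}$, $\mathbb H(\mathcal L;L_1,\ldots,L_m)=[\vec{\mathbf 1}_n^*(B_k\circ\overline{L_l})\vec{\mathbf 1}_q]_{k,l=1}^m$. *)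

theory Defs
  imports "Jordan_Normal_Form.Matrix" "Jordan_Normal_Form.DL_Rank"
begin

text \<open>All indices are 0-based. Scalars range over a field with an involutive
  automorphism (conjugate); real and complex are instances.\<close>

definition madj :: "'a::conjugatable_field mat \<Rightarrow> 'a mat" where
  "madj A = mat (dim_col A) (dim_row A) (\<lambda>(i,j). conjugate (A $$ (j,i)))"

definition mconj :: "'a::conjugatable_field mat \<Rightarrow> 'a mat" where
  "mconj A = mat (dim_row A) (dim_col A) (\<lambda>(i,j). conjugate (A $$ (i,j)))"

definition hermitian_m :: "'a::conjugatable_field mat \<Rightarrow> bool" where
  "hermitian_m H = (madj H = H)"

definition munit :: "nat \<Rightarrow> nat \<Rightarrow> nat \<Rightarrow> 'a::field mat" where
  "munit q i j = mat q q (\<lambda>(a,b). if a = i \<and> b = j then 1 else 0)"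

definition linear_map_on :: "nat \<Rightarrow> nat \<Rightarrow> ('a::field mat \<Rightarrow> 'a mat) \<Rightarrow> bool" where
  "linear_map_on n q L =
     ((\<forall>V \<in> carrier_mat q q. L V \<in> carrier_mat n n) \<and>
      (\<forall>X \<in> carrier_mat q q. \<forall>Y \<in> carrier_mat q q. \<forall>a b.
          L (a \<cdot>\<^sub>m X + b \<cdot>\<^sub>m Y) = a \<cdot>\<^sub>m L X + b \<cdot>\<^sub>m L Y))"

definition star_linear :: "nat \<Rightarrow> ('a::conjugatable_field mat \<Rightarrow> 'a mat) \<Rightarrow> bool" where
  "star_linear q L = (\<forall>V \<in> carrier_mat q q. L (madj V) = madj (L V))"

text \<open>Matricization L (n^2 x q^2) with L vec(V) = vec(L(V)), column stacking:
  vec(V) at index c is V(c mod q, c div q).\<close>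
definition matricization :: "('a::field mat \<Rightarrow> 'a mat) \<Rightarrow> nat \<Rightarrow> nat \<Rightarrow> 'a mat" where
  "matricization L n q = mat (n*n) (q*q)
     (\<lambda>(r,c). L (munit q (c mod q) (c div q)) $$ (r mod n, r div n))"

definition mblock :: "('a::field mat \<Rightarrow> 'a mat) \<Rightarrow> nat \<Rightarrow> nat \<Rightarrow> nat \<Rightarrow> nat \<Rightarrow> 'a mat" where
  "mblock L n q i j = mat n q (\<lambda>(a,b). matricization L n q $$ (i*n + a, j*q + b))"

definition mblocks :: "('a::field mat \<Rightarrow> 'a mat) \<Rightarrow> nat \<Rightarrow> nat \<Rightarrow> 'a mat set" where
  "mblocks L n q = {mblock L n q i j | i j. i < n \<and> j < q}"

definition choi :: "('a::field mat \<Rightarrow> 'a mat) \<Rightarrow> nat \<Rightarrow> nat \<Rightarrow> 'a mat" where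
  "choi L n q = mat (q*n) (q*n)
     (\<lambda>(r,c). L (munit q (r div n) (c div n)) $$ (r mod n, c mod n))"

definition msum :: "nat \<Rightarrow> nat \<Rightarrow> 'b set \<Rightarrow> ('b \<Rightarrow> 'a::field mat) \<Rightarrow> 'a mat" where
  "msum n q I f = mat n q (\<lambda>(a,b). \<Sum>k\<in>I. f k $$ (a,b))"

definition mspan :: "nat \<Rightarrow> nat \<Rightarrow> 'a::field mat set \<Rightarrow> 'a mat set" where
  "mspan n q S = {M. \<exists>F c. finite F \<and> F \<subseteq> S \<and> M = msum n q F (\<lambda>X. c X \<cdot>\<^sub>m X)}"

definition hill_rep :: "('a::conjugatable_field mat \<Rightarrow> 'a mat) \<Rightarrow> nat \<Rightarrow> nat \<Rightarrow> nat
    \<Rightarrow> (nat \<Rightarrow> 'a mat) \<Rightarrow> 'a mat \<Rightarrow> bool" where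
  "hill_rep L n q m A H =
     ((\<forall>k<m. A k \<in> carrier_mat n q) \<and> H \<in> carrier_mat m m \<and>
      (\<forall>V \<in> carrier_mat q q.
         L V = msum n n ({..<m} \<times> {..<m}) (\<lambda>(k,l). H $$ (k,l) \<cdot>\<^sub>m (A l * V * madj (A k)))))"

definition minimal_hill_rep :: "('a::conjugatable_field mat \<Rightarrow> 'a mat) \<Rightarrow> nat \<Rightarrow> nat \<Rightarrow> nat
    \<Rightarrow> (nat \<Rightarrow> 'a mat) \<Rightarrow> 'a mat \<Rightarrow> bool" where
  "minimal_hill_rep L n q m A H =
     (hill_rep L n q m A H \<and>
      (\<forall>m' (A' :: nat \<Rightarrow> 'a mat) H'. hill_rep L n q m' A' H' \<longrightarrow> m \<le> m'))"

definition ones_vec :: "nat \<Rightarrow> 'a::field vec" where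
  "ones_vec p = vec p (\<lambda>_. 1)"

definition hadamard :: "'a::field mat \<Rightarrow> 'a mat \<Rightarrow> 'a mat" where
  "hadamard A B = mat (dim_row A) (dim_col A) (\<lambda>ij. A $$ ij * B $$ ij)"

definition hill_matrix :: "nat \<Rightarrow> nat \<Rightarrow> nat \<Rightarrow> (nat \<Rightarrow> 'a::conjugatable_field mat)
    \<Rightarrow> (nat \<Rightarrow> 'a mat) \<Rightarrow> 'a mat" where
  "hill_matrix n q m B Ls = mat m m
     (\<lambda>(k,l). conjugate (ones_vec n) \<bullet> (hadamard (B k) (mconj (Ls l)) *\<^sub>v ones_vec q))"

definition kron :: "'a::field mat \<Rightarrow> 'a mat \<Rightarrow> 'a mat" where
  "kron A B = mat (dim_row A * dim_row B) (dim_col A * dim_col B)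
     (\<lambda>(r,c). A $$ (r div dim_row B, c div dim_col B) * B $$ (r mod dim_row B, c mod dim_col B))"

definition vstack :: "nat \<Rightarrow> nat \<Rightarrow> nat \<Rightarrow> (nat \<Rightarrow> 'a mat) \<Rightarrow> 'a mat" where
  "vstack n q m A = mat (m*n) q (\<lambda>(r,c). A (r div n) $$ (r mod n, c))"

end

theory Submission
  imports Defs
begin

text \<open>Stacking the columns of \<open>n \<times> q\<close> matrices turns \<^const>\<open>mspan\<close> into an ordinary span of
  vectors, and the columns of the Choi matrix are exactly the stacked blocks \<open>L\<^sub>i\<^sub>j\<close>, so its rank
  is the dimension of the span of the blocks. A Hill representation with matrices \<open>A\<^sub>l\<close> writes every
  block as \<open>L\<^sub>i\<^sub>j = (\<Sum>l. (\<Sum>k. H\<^sub>k\<^sub>l conj (A\<^sub>k(i,j))) A\<^sub>l)\<close>; hence it has at least rank many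
  terms, and one with exactly rank many terms has \<open>A\<^sub>l\<close> spanning the blocks, which is (b). For (a),
  star-linearity turns the expansion \<open>L\<^sub>i\<^sub>j = (\<Sum>k. \<lambda>\<^sup>i\<^sup>j\<^sub>k A\<^sub>k)\<close> into
  \<open>L\<^sub>i\<^sub>j = (\<Sum>k. conj (A\<^sub>k(i,j)) L\<^sub>k)\<close>. Expanding \<open>L\<^sub>k = (\<Sum>i j. \<beta>\<^sup>k\<^sub>i\<^sub>j L\<^sub>i\<^sub>j)\<close> back in the basis
  \<open>A\<^sub>l\<close> gives \<open>L\<^sub>k = (\<Sum>l. H\<^sub>k\<^sub>l A\<^sub>l)\<close> with \<open>H\<close> the Hill matrix, and comparing coefficients in
  the independent family \<open>A\<^sub>l\<close> yields both the Hill representation with matrix \<open>H\<close> and \<open>H = H\<^sup>*\<close>.\<close>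

lemma mult_add_less_mult: "(i::nat) < n \<Longrightarrow> a < m \<Longrightarrow> i * m + a < n * m"
proof -
  assume "i < n" "a < m"
  then have "i * m + a < (i + 1) * m" by simp
  also have "\<dots> \<le> n * m" using \<open>i < n\<close> by (intro mult_right_mono) auto
  finally show ?thesis .
qed

lemma mod_div_less_of_less_mult: "(r::nat) < q * n \<Longrightarrow> r mod n < n \<and> r div n < q"
  by (metis less_mult_imp_div_less mod_less_divisor mult_is_0 neq0_conv not_less0 mult.commute)

lemma sum_lessThan_mult: "(\<Sum>t<(m::nat) * n. g t) = (\<Sum>l<m. \<Sum>s<n. g (l * n + s))"
proof -
  let ?h = "\<lambda>p. fst p * n + snd p"
  have "bij_betw ?h ({..<m} \<times> {..<n}) {..<m * n}"
  proof (rule bij_betw_byWitness[where f' = "\<lambda>t. (t div n, t mod n)"])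
    show "?h ` ({..<m} \<times> {..<n}) \<subseteq> {..<m * n}"
      by (auto simp: mult_add_less_mult)
    show "(\<lambda>t. (t div n, t mod n)) ` {..<m * n} \<subseteq> {..<m} \<times> {..<n}"
      using mod_div_less_of_less_mult by auto
  qed auto
  then have "(\<Sum>t<m * n. g t) = (\<Sum>p\<in>{..<m} \<times> {..<n}. g (?h p))"
    by (rule sum.reindex_bij_betw[symmetric])
  then show ?thesis
    by (simp add: sum.cartesian_product split_beta)
qed

lemma conjugate_one: "conjugate (1::'a::conjugatable_field) = 1"
proof -
  have "conjugate (1::'a) = conjugate 1 * conjugate (conjugate 1)" by simp
  also have "\<dots> = 1" by (simp only: conjugate_dist_mul [symmetric]) simp
  finally show ?thesis .
qed

lemma index_mult_mat_sum:
  "A \<in> carrier_mat na nb \<Longrightarrow> B \<in> carrier_mat nb nc \<Longrightarrow> i < na \<Longrightarrow> j < nc \<Longrightarrow>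
    (A * B) $$ (i, j) = (\<Sum>t<nb. A $$ (i, t) * B $$ (t, j))"
  by (auto simp: scalar_prod_def atLeast0LessThan intro!: sum.cong)

section \<open>Column-stacking vectorisation\<close>

definition vectorize :: "nat \<Rightarrow> nat \<Rightarrow> 'a mat \<Rightarrow> 'a vec" where
  "vectorize nn qq M = vec (qq * nn) (\<lambda>r. M $$ (r mod nn, r div nn))"

definition unvectorize :: "nat \<Rightarrow> nat \<Rightarrow> 'a vec \<Rightarrow> 'a mat" where
  "unvectorize nn qq v = mat nn qq (\<lambda>(a, b). v $ (b * nn + a))"

lemma vectorize_carrier [simp]: "vectorize nn qq M \<in> carrier_vec (qq * nn)"
  unfolding vectorize_def by auto

lemma unvectorize_vectorize: "M \<in> carrier_mat nn qq \<Longrightarrow> unvectorize nn qq (vectorize nn qq M) = M"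
  unfolding unvectorize_def vectorize_def by (rule eq_matI) (auto simp: mult_add_less_mult)

lemma vectorize_unvectorize: "v \<in> carrier_vec (qq * nn) \<Longrightarrow> vectorize nn qq (unvectorize nn qq v) = v"
  unfolding unvectorize_def vectorize_def by (rule eq_vecI) (auto simp: mod_div_less_of_less_mult)

lemma inj_on_vectorize: "inj_on (vectorize nn qq) (carrier_mat nn qq)"
  by (metis inj_onI unvectorize_vectorize)

lemma inj_on_unvectorize: "inj_on (unvectorize nn qq) (carrier_vec (qq * nn))"
  by (metis inj_onI vectorize_unvectorize)

section \<open>Finite linear combinations and spans of matrices\<close>

lemma msum_carrier [simp]: "msum nn qq I f \<in> carrier_mat nn qq"
  and dim_msum [simp]: "dim_row (msum nn qq I f) = nn" "dim_col (msum nn qq I f) = qq"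
  and index_msum [simp]: "i < nn \<Longrightarrow> j < qq \<Longrightarrow> msum nn qq I f $$ (i, j) = (\<Sum>k\<in>I. f k $$ (i, j))"
  unfolding msum_def by auto

lemma index_msum_smult:
  "i < nn \<Longrightarrow> j < qq \<Longrightarrow> (\<And>k. k \<in> I \<Longrightarrow> f k \<in> carrier_mat nn qq) \<Longrightarrow>
    msum nn qq I (\<lambda>k. c k \<cdot>\<^sub>m f k) $$ (i, j) = (\<Sum>k\<in>I. c k * f k $$ (i, j))"
  by (auto intro!: sum.cong) (metis carrier_matD index_smult_mat(1))

lemma mspan_carrier: "mspan nn qq S \<subseteq> carrier_mat nn qq"
  unfolding mspan_def by auto

lemma subset_mspan:
  assumes S: "S \<subseteq> carrier_mat nn qq"
  shows "S \<subseteq> mspan nn qq S"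
proof
  fix X assume X: "X \<in> S"
  have "X = msum nn qq {X} (\<lambda>Y. 1 \<cdot>\<^sub>m Y)"
    using X S by (intro eq_matI) auto
  then show "X \<in> mspan nn qq S"
    unfolding mspan_def using X by (intro CollectI exI[of _ "{X}"] exI[of _ "\<lambda>Y. 1"]) auto
qed

lemma msum_in_mspan:
  assumes I: "finite I" and f: "\<And>k. k \<in> I \<Longrightarrow> f k \<in> carrier_mat nn qq"
  shows "msum nn qq I (\<lambda>k. c k \<cdot>\<^sub>m f k) \<in> mspan nn qq (f ` I)"
proof -
  \<comment> \<open>the family may repeat matrices, so coefficients of equal members are merged\<close>
  define d where "d X = (\<Sum>k\<in>{k\<in>I. f k = X}. c k)" for X
  have "msum nn qq I (\<lambda>k. c k \<cdot>\<^sub>m f k) = msum nn qq (f ` I) (\<lambda>X. d X \<cdot>\<^sub>m X)"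
  proof (rule eq_matI)
    fix i j assume "i < dim_row (msum nn qq (f ` I) (\<lambda>X. d X \<cdot>\<^sub>m X))"
      "j < dim_col (msum nn qq (f ` I) (\<lambda>X. d X \<cdot>\<^sub>m X))"
    then have i: "i < nn" and j: "j < qq" by auto
    have "msum nn qq (f ` I) (\<lambda>X. d X \<cdot>\<^sub>m X) $$ (i, j) = (\<Sum>X\<in>f ` I. d X * X $$ (i, j))"
      using i j f by (intro index_msum_smult) auto
    also have "\<dots> = (\<Sum>X\<in>f ` I. \<Sum>k\<in>{k\<in>I. f k = X}. c k * f k $$ (i, j))"
      unfolding d_def sum_distrib_right by (intro sum.cong refl) auto
    also have "\<dots> = (\<Sum>k\<in>I. c k * f k $$ (i, j))"
      by (rule sum.image_gen[symmetric]) (rule I)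
    also have "\<dots> = msum nn qq I (\<lambda>k. c k \<cdot>\<^sub>m f k) $$ (i, j)"
      using i j f by (intro index_msum_smult[symmetric]) auto
    finally show "msum nn qq I (\<lambda>k. c k \<cdot>\<^sub>m f k) $$ (i, j) = msum nn qq (f ` I) (\<lambda>X. d X \<cdot>\<^sub>m X) $$ (i, j)"
      by simp
  qed auto
  then show ?thesis
    unfolding mspan_def using I by (intro CollectI exI[of _ "f ` I"] exI[of _ d]) auto
qed

lemma mspan_image_msum:
  assumes I: "finite I" and f: "\<And>k. k \<in> I \<Longrightarrow> f k \<in> carrier_mat nn qq"
    and M: "M \<in> mspan nn qq (f ` I)"
  obtains c where "M = msum nn qq I (\<lambda>k. c k \<cdot>\<^sub>m f k)"
proof -
  obtain F d where F: "finite F" "F \<subseteq> f ` I" "M = msum nn qq F (\<lambda>X. d X \<cdot>\<^sub>m X)"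
    using M unfolding mspan_def by auto
  define g where "g = inv_into I f"
  have fg: "X \<in> F \<Longrightarrow> f (g X) = X \<and> g X \<in> I" for X
    using F(2) unfolding g_def by (auto intro: f_inv_into_f inv_into_into)
  have inj_g: "inj_on g F" by (metis fg inj_onI)
  define c where "c k = (if k \<in> g ` F then d (f k) else 0)" for k
  have "M = msum nn qq I (\<lambda>k. c k \<cdot>\<^sub>m f k)"
  proof (rule eq_matI)
    fix i j assume "i < dim_row (msum nn qq I (\<lambda>k. c k \<cdot>\<^sub>m f k))"
      "j < dim_col (msum nn qq I (\<lambda>k. c k \<cdot>\<^sub>m f k))"
    then have i: "i < nn" and j: "j < qq" by auto
    have "msum nn qq I (\<lambda>k. c k \<cdot>\<^sub>m f k) $$ (i, j) = (\<Sum>k\<in>I. c k * f k $$ (i, j))"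
      using i j f by (intro index_msum_smult) auto
    also have "\<dots> = (\<Sum>k\<in>g ` F. d (f k) * f k $$ (i, j))"
      unfolding c_def using fg I by (intro sum.mono_neutral_cong_right) auto
    also have "\<dots> = (\<Sum>X\<in>F. d X * X $$ (i, j))"
      using fg by (simp add: sum.reindex[OF inj_g])
    also have "\<dots> = M $$ (i, j)"
      unfolding F(3) using i j F(2) f by (intro index_msum_smult[symmetric]) auto
    finally show "M $$ (i, j) = msum nn qq I (\<lambda>k. c k \<cdot>\<^sub>m f k) $$ (i, j)" by simp
  qed (use F in auto)
  then show ?thesis by (rule that)
qed

lemma msum_smult_diff_eq_zero:
  assumes f: "\<And>k. k \<in> I \<Longrightarrow> f k \<in> carrier_mat nn qq"
    and eq: "msum nn qq I (\<lambda>k. c k \<cdot>\<^sub>m f k) = msum nn qq I (\<lambda>k. d k \<cdot>\<^sub>m f k)"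
  shows "msum nn qq I (\<lambda>k. (c k - d k) \<cdot>\<^sub>m f k) = (0\<^sub>m nn qq :: 'a::field mat)"
proof (rule eq_matI)
  fix i j assume "i < dim_row (0\<^sub>m nn qq :: 'a mat)" "j < dim_col (0\<^sub>m nn qq :: 'a mat)"
  then have ij: "i < nn" "j < qq" by auto
  have "msum nn qq I (\<lambda>k. (c k - d k) \<cdot>\<^sub>m f k) $$ (i, j) = (\<Sum>k\<in>I. (c k - d k) * f k $$ (i, j))"
    using ij f by (intro index_msum_smult) auto
  also have "\<dots> = (\<Sum>k\<in>I. c k * f k $$ (i, j)) - (\<Sum>k\<in>I. d k * f k $$ (i, j))"
    by (simp add: sum_subtractf left_diff_distrib)
  also have "\<dots> = msum nn qq I (\<lambda>k. c k \<cdot>\<^sub>m f k) $$ (i, j) - msum nn qq I (\<lambda>k. d k \<cdot>\<^sub>m f k) $$ (i, j)"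
    by (simp only: index_msum_smult[OF ij f])
  also have "\<dots> = 0" using eq by simp
  finally show "msum nn qq I (\<lambda>k. (c k - d k) \<cdot>\<^sub>m f k) $$ (i, j) = 0\<^sub>m nn qq $$ (i, j)"
    using ij by simp
qed auto

context vec_space
begin

lemma vectorize_msum:
  assumes n: "n = qq * nn" and F: "finite F" "F \<subseteq> carrier_mat nn qq"
  shows "vectorize nn qq (msum nn qq F (\<lambda>X. c X \<cdot>\<^sub>m X))
    = lincomb (\<lambda>v. c (unvectorize nn qq v)) (vectorize nn qq ` F)"
proof (rule eq_vecI)
  have VF: "vectorize nn qq ` F \<subseteq> carrier_vec n" using n by auto
  then show dim: "dim_vec (vectorize nn qq (msum nn qq F (\<lambda>X. c X \<cdot>\<^sub>m X)))
    = dim_vec (lincomb (\<lambda>v. c (unvectorize nn qq v)) (vectorize nn qq ` F))"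
    using n lincomb_dim[OF _ VF] F(1) by (simp add: vectorize_def)
  fix r assume "r < dim_vec (lincomb (\<lambda>v. c (unvectorize nn qq v)) (vectorize nn qq ` F))"
  then have r: "r < qq * nn" using dim by (simp add: vectorize_def)
  have "lincomb (\<lambda>v. c (unvectorize nn qq v)) (vectorize nn qq ` F) $ r
      = (\<Sum>v\<in>vectorize nn qq ` F. c (unvectorize nn qq v) * v $ r)"
    using lincomb_index VF r n by simp
  also have "\<dots> = (\<Sum>X\<in>F. c (unvectorize nn qq (vectorize nn qq X)) * vectorize nn qq X $ r)"
    by (rule sum.reindex_cong[OF inj_on_subset[OF inj_on_vectorize F(2)]]) auto
  also have "\<dots> = (\<Sum>X\<in>F. c X * X $$ (r mod nn, r div nn))"
  proof (intro sum.cong refl)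
    fix X assume "X \<in> F"
    then show "c (unvectorize nn qq (vectorize nn qq X)) * vectorize nn qq X $ r
      = c X * X $$ (r mod nn, r div nn)"
      using F(2) r by (simp add: unvectorize_vectorize subset_iff) (simp add: vectorize_def)
  qed
  also have "\<dots> = msum nn qq F (\<lambda>X. c X \<cdot>\<^sub>m X) $$ (r mod nn, r div nn)"
    using mod_div_less_of_less_mult[OF r] F(2) by (intro index_msum_smult[symmetric]) auto
  also have "\<dots> = vectorize nn qq (msum nn qq F (\<lambda>X. c X \<cdot>\<^sub>m X)) $ r"
    using r by (simp add: vectorize_def)
  finally show "vectorize nn qq (msum nn qq F (\<lambda>X. c X \<cdot>\<^sub>m X)) $ r
    = lincomb (\<lambda>v. c (unvectorize nn qq v)) (vectorize nn qq ` F) $ r" by simp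
qed

lemma unvectorize_lincomb:
  assumes n: "n = qq * nn" and W: "finite W" "W \<subseteq> carrier_vec n"
  shows "unvectorize nn qq (lincomb a W)
    = msum nn qq (unvectorize nn qq ` W) (\<lambda>X. a (vectorize nn qq X) \<cdot>\<^sub>m X)"
proof (rule eq_matI)
  have W': "W \<subseteq> carrier_vec (qq * nn)" using W n by simp
  fix i j assume "i < dim_row (msum nn qq (unvectorize nn qq ` W) (\<lambda>X. a (vectorize nn qq X) \<cdot>\<^sub>m X))"
    "j < dim_col (msum nn qq (unvectorize nn qq ` W) (\<lambda>X. a (vectorize nn qq X) \<cdot>\<^sub>m X))"
  then have i: "i < nn" and j: "j < qq" by auto
  have r: "j * nn + i < n" using mult_add_less_mult[OF j i] n by simp
  have "msum nn qq (unvectorize nn qq ` W) (\<lambda>X. a (vectorize nn qq X) \<cdot>\<^sub>m X) $$ (i, j)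
      = (\<Sum>X\<in>unvectorize nn qq ` W. a (vectorize nn qq X) * X $$ (i, j))"
    using i j by (intro index_msum_smult) (auto simp: unvectorize_def)
  also have "\<dots> = (\<Sum>v\<in>W. a (vectorize nn qq (unvectorize nn qq v)) * unvectorize nn qq v $$ (i, j))"
    by (rule sum.reindex_cong[OF inj_on_subset[OF inj_on_unvectorize W']]) auto
  also have "\<dots> = (\<Sum>v\<in>W. a v * v $ (j * nn + i))"
  proof (intro sum.cong refl)
    fix v assume "v \<in> W"
    then show "a (vectorize nn qq (unvectorize nn qq v)) * unvectorize nn qq v $$ (i, j) = a v * v $ (j * nn + i)"
      using W' i j by (simp add: vectorize_unvectorize subset_iff) (simp add: unvectorize_def)
  qed
  also have "\<dots> = lincomb a W $ (j * nn + i)"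
    using lincomb_index[OF r W(2)] by simp
  also have "\<dots> = unvectorize nn qq (lincomb a W) $$ (i, j)"
    using i j by (simp add: unvectorize_def)
  finally show "unvectorize nn qq (lincomb a W) $$ (i, j)
    = msum nn qq (unvectorize nn qq ` W) (\<lambda>X. a (vectorize nn qq X) \<cdot>\<^sub>m X) $$ (i, j)" by simp
qed (auto simp: unvectorize_def)

lemma mspan_iff_span_vectorize:
  assumes n: "n = qq * nn" and S: "S \<subseteq> carrier_mat nn qq"
  shows "M \<in> mspan nn qq S \<longleftrightarrow> M \<in> carrier_mat nn qq \<and> vectorize nn qq M \<in> span (vectorize nn qq ` S)"
proof
  assume "M \<in> mspan nn qq S"
  then obtain F c where F: "finite F" "F \<subseteq> S" "M = msum nn qq F (\<lambda>X. c X \<cdot>\<^sub>m X)"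
    unfolding mspan_def by auto
  have "vectorize nn qq M = lincomb (\<lambda>v. c (unvectorize nn qq v)) (vectorize nn qq ` F)"
    unfolding F(3) using F S by (intro vectorize_msum[OF n]) auto
  moreover have "vectorize nn qq ` F \<subseteq> vectorize nn qq ` S" using F by auto
  ultimately show "M \<in> carrier_mat nn qq \<and> vectorize nn qq M \<in> span (vectorize nn qq ` S)"
    using F by (auto intro!: in_spanI)
next
  assume "M \<in> carrier_mat nn qq \<and> vectorize nn qq M \<in> span (vectorize nn qq ` S)"
  then have M: "M \<in> carrier_mat nn qq" and "vectorize nn qq M \<in> span (vectorize nn qq ` S)"
    by auto
  then obtain a W where W: "vectorize nn qq M = lincomb a W" "finite W" "W \<subseteq> vectorize nn qq ` S"
    using in_spanE by blast
  have WC: "W \<subseteq> carrier_vec n" using W(3) n by auto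
  have "M = unvectorize nn qq (lincomb a W)"
    using unvectorize_vectorize[OF M] W(1) by simp
  also have "\<dots> = msum nn qq (unvectorize nn qq ` W) (\<lambda>X. a (vectorize nn qq X) \<cdot>\<^sub>m X)"
    by (rule unvectorize_lincomb[OF n W(2) WC])
  moreover have "unvectorize nn qq ` W \<subseteq> S"
    using W(3) S by (auto simp: unvectorize_vectorize subset_iff)
  ultimately show "M \<in> mspan nn qq S"
    unfolding mspan_def using W(2)
    by (intro CollectI exI[of _ "unvectorize nn qq ` W"] exI[of _ "\<lambda>X. a (vectorize nn qq X)"]) auto
qed

end

lemma mspan_subset_mspanI:
  assumes U: "U \<subseteq> carrier_mat nn qq" and T: "T \<subseteq> mspan nn qq U"
  shows "mspan nn qq T \<subseteq> mspan nn qq (U :: 'a::field mat set)"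
proof
  interpret V: vec_space "TYPE('a)" "qq * nn" .
  have TC: "T \<subseteq> carrier_mat nn qq" using T mspan_carrier by blast
  fix M assume "M \<in> mspan nn qq T"
  then have M: "M \<in> carrier_mat nn qq" "vectorize nn qq M \<in> V.span (vectorize nn qq ` T)"
    using V.mspan_iff_span_vectorize[OF refl TC] by auto
  have "vectorize nn qq ` T \<subseteq> V.span (vectorize nn qq ` U)"
    using V.mspan_iff_span_vectorize[OF refl U] T by auto
  then have "V.span (vectorize nn qq ` T) \<subseteq> V.span (vectorize nn qq ` U)"
    by (intro V.span_subsetI) auto
  then show "M \<in> mspan nn qq U" using M V.mspan_iff_span_vectorize[OF refl U] by auto
qed

section \<open>Rank and spanning families\<close>

context vec_space
begin

lemma card_le_of_lin_indpt_subset_span: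
  "finite A \<Longrightarrow> finite B \<Longrightarrow> B \<subseteq> carrier_vec n \<Longrightarrow> lin_indpt A \<Longrightarrow> A \<subseteq> span B \<Longrightarrow> card A \<le> card B"
  by (drule replacement) auto

lemma rank_basisE:
  assumes M: "M \<in> carrier_mat n nc"
  obtains S where "S \<subseteq> set (cols M)" "lin_indpt S" "set (cols M) \<subseteq> span S" "card S = rank M" "finite S"
proof -
  have "lin_indpt {}" unfolding lin_dep_def by auto
  then obtain S where S: "finite S" "maximal S (\<lambda>T. T \<subseteq> set (cols M) \<and> lin_indpt T)"
    using maximal_exists_superset[of "set (cols M)" "\<lambda>T. T \<subseteq> set (cols M) \<and> lin_indpt T" "{}"]
    by auto
  then have sub: "S \<subseteq> set (cols M)" and li: "lin_indpt S" unfolding maximal_def by auto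
  have cols: "set (cols M) \<subseteq> carrier_vec n" using M cols_dim by blast
  then have SC: "S \<subseteq> carrier_vec n" using sub by auto
  have "set (cols M) \<subseteq> span S"
  proof
    fix s assume s: "s \<in> set (cols M)"
    show "s \<in> span S"
    proof (rule ccontr)
      assume ns: "s \<notin> span S"
      then have "s \<notin> S" using in_own_span[OF SC] by auto
      then have "lin_indpt (S \<union> {s})"
        using lin_dep_iff_in_span[OF SC li] s cols ns by auto
      then have "S \<union> {s} = S" using S(2) s sub unfolding maximal_def by blast
      then show False using \<open>s \<notin> S\<close> by auto
    qed
  qed
  moreover have "card S = rank M" using rank_card_indpt[OF M S(2)] by simp
  ultimately show ?thesis using that sub li S(1) by auto
qed

end

text \<open>\<^term>\<open>Mx\<close> is a matrix whose columns are the column-stacked members of \<^term>\<open>Bl\<close>, so that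
  its rank is the dimension of \<^term>\<open>mspan nn qq Bl\<close>.\<close>

locale vectorized_columns = vec_space "TYPE('a)" "qq * nn"
    for nn qq :: nat and Bl :: "'a::field mat set" +
  fixes Mx :: "'a mat" and nc :: nat
  assumes Bl_carrier: "Bl \<subseteq> carrier_mat nn qq"
    and Mx_carrier: "Mx \<in> carrier_mat (qq * nn) nc"
    and set_cols_Mx: "set (cols Mx) = vectorize nn qq ` Bl"
begin

lemma rank_basis_in_span:
  assumes T: "T \<subseteq> carrier_mat nn qq" "Bl \<subseteq> mspan nn qq T"
  obtains S where "S \<subseteq> set (cols Mx)" "lin_indpt S" "finite S" "card S = rank Mx"
    "S \<subseteq> span (vectorize nn qq ` T)"
proof -
  obtain S where S: "S \<subseteq> set (cols Mx)" "lin_indpt S" "set (cols Mx) \<subseteq> span S"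
    "card S = rank Mx" "finite S"
    using rank_basisE[OF Mx_carrier] .
  have cols: "set (cols Mx) \<subseteq> carrier_vec (qq * nn)"
    using Mx_carrier by (metis carrier_matD(1) cols_dim)
  have "set (cols Mx) \<subseteq> span (vectorize nn qq ` T)"
    using set_cols_Mx mspan_iff_span_vectorize[OF refl T(1)] T(2) by auto
  then have "span (set (cols Mx)) \<subseteq> span (vectorize nn qq ` T)"
    by (intro span_subsetI) auto
  moreover have "S \<subseteq> span (set (cols Mx))" using S(1) in_own_span[OF cols] by blast
  ultimately have "S \<subseteq> span (vectorize nn qq ` T)" by blast
  with S show thesis by (intro that) auto
qed

lemma rank_le_card_of_mspan:
  assumes T: "finite T" "T \<subseteq> carrier_mat nn qq" "Bl \<subseteq> mspan nn qq T"
  shows "rank Mx \<le> card T"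
proof -
  obtain S where "S \<subseteq> set (cols Mx)"
    and S: "lin_indpt S" "finite S" "card S = rank Mx" "S \<subseteq> span (vectorize nn qq ` T)"
    by (rule rank_basis_in_span[OF T(2,3)])
  have VT: "vectorize nn qq ` T \<subseteq> carrier_vec (qq * nn)" by auto
  have "card S \<le> card (vectorize nn qq ` T)"
    using card_le_of_lin_indpt_subset_span[OF S(2) _ VT S(1,4)] T(1) by auto
  also have "\<dots> \<le> card T" by (rule card_image_le[OF T(1)])
  finally show ?thesis using S(3) by simp
qed

lemma subset_mspan_of_card_le_rank:
  assumes T: "finite T" "T \<subseteq> carrier_mat nn qq" "Bl \<subseteq> mspan nn qq T"
    and card: "card T \<le> rank Mx"
  shows "T \<subseteq> mspan nn qq Bl"
proof
  obtain S where S_cols: "S \<subseteq> set (cols Mx)" and S: "lin_indpt S" "finite S" "card S = rank Mx"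
    "S \<subseteq> span (vectorize nn qq ` T)"
    by (rule rank_basis_in_span[OF T(2,3)])
  have SC: "S \<subseteq> carrier_vec (qq * nn)"
    using S_cols Mx_carrier by (metis carrier_matD(1) cols_dim subset_trans)
  have VT: "vectorize nn qq ` T \<subseteq> carrier_vec (qq * nn)" by auto
  fix t assume t: "t \<in> T"
  \<comment> \<open>otherwise S and t would form an independent subset of span T larger than T\<close>
  have "vectorize nn qq t \<in> span S"
  proof (rule ccontr)
    assume ns: "vectorize nn qq t \<notin> span S"
    then have nS: "vectorize nn qq t \<notin> S" using in_own_span[OF SC] by auto
    then have "lin_indpt (insert (vectorize nn qq t) S)"
      using lin_dep_iff_in_span[OF SC S(1) _ nS] ns by auto
    moreover have "insert (vectorize nn qq t) S \<subseteq> span (vectorize nn qq ` T)"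
      using S(4) in_own_span[OF VT] t by auto
    ultimately have "card (insert (vectorize nn qq t) S) \<le> card (vectorize nn qq ` T)"
      using card_le_of_lin_indpt_subset_span[OF _ _ VT] S(2) T(1) by simp
    also have "\<dots> \<le> card T" by (rule card_image_le[OF T(1)])
    finally show False using nS S(2,3) card by simp
  qed
  moreover have "span S \<subseteq> span (set (cols Mx))"
    by (rule span_is_monotone[OF S_cols])
  ultimately show "t \<in> mspan nn qq Bl"
    using mspan_iff_span_vectorize[OF refl Bl_carrier] set_cols_Mx T(2) t by auto
qed

lemma mspan_eq_of_spanning_family:
  assumes f: "\<And>k. k < rank Mx \<Longrightarrow> f k \<in> carrier_mat nn qq"
    and sp: "Bl \<subseteq> mspan nn qq (f ` {..<rank Mx})"
  shows "mspan nn qq (f ` {..<rank Mx}) = mspan nn qq Bl"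
proof
  have fC: "f ` {..<rank Mx} \<subseteq> carrier_mat nn qq" using f by auto
  have "card (f ` {..<rank Mx}) \<le> rank Mx"
    using card_image_le[of "{..<rank Mx}" f] by simp
  then have "f ` {..<rank Mx} \<subseteq> mspan nn qq Bl"
    using subset_mspan_of_card_le_rank[OF _ fC sp] by simp
  then show "mspan nn qq (f ` {..<rank Mx}) \<subseteq> mspan nn qq Bl"
    by (rule mspan_subset_mspanI[OF Bl_carrier])
  show "mspan nn qq Bl \<subseteq> mspan nn qq (f ` {..<rank Mx})"
    by (rule mspan_subset_mspanI[OF fC sp])
qed

lemma msum_eq_zero_imp_coeff_zero:
  assumes f: "\<And>k. k < rank Mx \<Longrightarrow> f k \<in> carrier_mat nn qq"
    and sp: "Bl \<subseteq> mspan nn qq (f ` {..<rank Mx})"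
    and zero: "msum nn qq {..<rank Mx} (\<lambda>k. c k \<cdot>\<^sub>m f k) = 0\<^sub>m nn qq"
    and k: "k < rank Mx"
  shows "c k = 0"
proof (rule ccontr)
  let ?r = "rank Mx" and ?I = "{..<rank Mx} - {k}"
  assume ck: "c k \<noteq> 0"
  \<comment> \<open>then f k is redundant, and fewer than rank Mx matrices would span Bl\<close>
  have fk: "f k = msum nn qq ?I (\<lambda>l. (- c l / c k) \<cdot>\<^sub>m f l)"
  proof (rule eq_matI)
    fix i j assume "i < dim_row (msum nn qq ?I (\<lambda>l. (- c l / c k) \<cdot>\<^sub>m f l))"
      "j < dim_col (msum nn qq ?I (\<lambda>l. (- c l / c k) \<cdot>\<^sub>m f l))"
    then have i: "i < nn" and j: "j < qq" by auto
    have "0 = msum nn qq {..<?r} (\<lambda>k. c k \<cdot>\<^sub>m f k) $$ (i, j)" using zero i j by simp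
    also have "\<dots> = (\<Sum>l<?r. c l * f l $$ (i, j))" using i j f by (intro index_msum_smult) auto
    also have "\<dots> = c k * f k $$ (i, j) + (\<Sum>l\<in>?I. c l * f l $$ (i, j))"
      using k by (subst sum.remove[of _ k]) auto
    finally have e: "(\<Sum>l\<in>?I. c l * f l $$ (i, j)) = - (c k * f k $$ (i, j))"
      by (simp add: eq_neg_iff_add_eq_0 add.commute)
    have "msum nn qq ?I (\<lambda>l. (- c l / c k) \<cdot>\<^sub>m f l) $$ (i, j) = (\<Sum>l\<in>?I. (- c l / c k) * f l $$ (i, j))"
      using i j f by (intro index_msum_smult) auto
    also have "\<dots> = (- 1 / c k) * (\<Sum>l\<in>?I. c l * f l $$ (i, j))"
      by (simp add: sum_distrib_left)
    also have "\<dots> = f k $$ (i, j)" using ck unfolding e by (simp add: field_simps)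
    finally show "f k $$ (i, j) = msum nn qq ?I (\<lambda>l. (- c l / c k) \<cdot>\<^sub>m f l) $$ (i, j)" by simp
  qed (use f k in auto)
  have fIC: "f ` ?I \<subseteq> carrier_mat nn qq" using f by auto
  have "f ` {..<?r} \<subseteq> mspan nn qq (f ` ?I)"
  proof
    fix X assume "X \<in> f ` {..<?r}"
    then obtain l where "l < ?r" "X = f l" by auto
    then show "X \<in> mspan nn qq (f ` ?I)"
      using fk msum_in_mspan[of ?I f nn qq "\<lambda>l. - c l / c k"] f subset_mspan[OF fIC]
      by (cases "l = k") auto
  qed
  then have "Bl \<subseteq> mspan nn qq (f ` ?I)"
    using sp mspan_subset_mspanI[OF fIC] by blast
  then have "?r \<le> card (f ` ?I)" using rank_le_card_of_mspan[OF _ fIC] by auto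
  also have "\<dots> \<le> card ?I" by (intro card_image_le) auto
  also have "\<dots> = ?r - 1" using k by simp
  finally show False using k by simp
qed

lemma msum_coeffs_unique:
  assumes f: "\<And>k. k < rank Mx \<Longrightarrow> f k \<in> carrier_mat nn qq"
    and sp: "Bl \<subseteq> mspan nn qq (f ` {..<rank Mx})"
    and eq: "msum nn qq {..<rank Mx} (\<lambda>k. c k \<cdot>\<^sub>m f k) = msum nn qq {..<rank Mx} (\<lambda>k. d k \<cdot>\<^sub>m f k)"
    and k: "k < rank Mx"
  shows "c k = d k"
  using msum_eq_zero_imp_coeff_zero[OF f sp msum_smult_diff_eq_zero[OF _ eq] k] f by simp

end

section \<open>Hill representations through the blocks of the matricization\<close>

lemma madj_carrier: "A \<in> carrier_mat a b \<Longrightarrow> madj A \<in> carrier_mat b a"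
  and index_madj: "A \<in> carrier_mat a b \<Longrightarrow> j < b \<Longrightarrow> i < a \<Longrightarrow> madj A $$ (j, i) = conjugate (A $$ (i, j))"
  unfolding madj_def by auto

lemma munit_carrier: "munit q b j \<in> carrier_mat q q"
  and index_munit: "b' < q \<Longrightarrow> j' < q \<Longrightarrow> munit q b j $$ (b', j') = (if b' = b \<and> j' = j then 1 else 0)"
  unfolding munit_def by auto

lemma mblock_carrier: "mblock L n q i j \<in> carrier_mat n q"
  and dim_mblock [simp]: "dim_row (mblock L n q i j) = n" "dim_col (mblock L n q i j) = q"
  unfolding mblock_def by auto

lemma index_mblock:
  "i < n \<Longrightarrow> j < q \<Longrightarrow> a < n \<Longrightarrow> b < q \<Longrightarrow> mblock L n q i j $$ (a, b) = L (munit q b j) $$ (a, i)"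
  unfolding mblock_def matricization_def
  using mult_add_less_mult[of i n a n] mult_add_less_mult[of j q b q] by simp

lemma mblocks_carrier: "mblocks L n q \<subseteq> carrier_mat n q"
  unfolding mblocks_def using mblock_carrier by auto

lemma mblocks_eq_image: "mblocks L n q = (\<lambda>(i, j). mblock L n q i j) ` ({..<n} \<times> {..<q})"
  unfolding mblocks_def by auto

text \<open>The linear map with blocks \<^term>\<open>X\<close>: since \<^term>\<open>L (munit q b j) $$ (a, i)\<close> is the entry
  \<^term>\<open>(a, b)\<close> of the block \<^term>\<open>(i, j)\<close>, linearity gives
  \<^term>\<open>L V $$ (a, i) = (\<Sum>b<q. \<Sum>j<q. V $$ (b, j) * mblock L n q i j $$ (a, b))\<close>.\<close>

definition block_action :: "nat \<Rightarrow> nat \<Rightarrow> (nat \<Rightarrow> nat \<Rightarrow> 'a::field mat) \<Rightarrow> 'a mat \<Rightarrow> 'a mat" where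
  "block_action nn qq X V = mat nn nn (\<lambda>(a, i). \<Sum>b<qq. \<Sum>j<qq. V $$ (b, j) * X i j $$ (a, b))"

lemma index_block_action_munit:
  assumes "a < nn" "i < nn" "b < qq" "j < qq"
  shows "block_action nn qq X (munit qq b j) $$ (a, i) = X i j $$ (a, b)"
proof -
  have "block_action nn qq X (munit qq b j) $$ (a, i)
      = (\<Sum>b'<qq. \<Sum>j'<qq. if b' = b \<and> j' = j then X i j' $$ (a, b') else 0)"
    unfolding block_action_def using assms by (auto simp: index_munit intro!: sum.cong)
  also have "\<dots> = (\<Sum>b'<qq. if b' = b then X i j $$ (a, b') else 0)"
    using assms by (intro sum.cong refl) (auto simp: sum.delta)
  also have "\<dots> = X i j $$ (a, b)"
    using assms by (simp add: sum.delta)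
  finally show ?thesis .
qed

lemma block_action_cong:
  "(\<And>i j. i < nn \<Longrightarrow> j < qq \<Longrightarrow> X i j = Y i j) \<Longrightarrow> block_action nn qq X V = block_action nn qq Y V"
  unfolding block_action_def by (intro eq_matI) auto

lemma linear_map_zero:
  assumes lin: "linear_map_on n q L"
  shows "L (0\<^sub>m q q) = 0\<^sub>m n n"
proof -
  have Z: "0\<^sub>m q q = (0::'a) \<cdot>\<^sub>m 0\<^sub>m q q + 0 \<cdot>\<^sub>m 0\<^sub>m q q" by (intro eq_matI) auto
  have C: "L (0\<^sub>m q q) \<in> carrier_mat n n" using lin unfolding linear_map_on_def by auto
  have "L ((0::'a) \<cdot>\<^sub>m 0\<^sub>m q q + 0 \<cdot>\<^sub>m 0\<^sub>m q q) = 0 \<cdot>\<^sub>m L (0\<^sub>m q q) + 0 \<cdot>\<^sub>m L (0\<^sub>m q q)"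
    using lin zero_carrier_mat[of q q] unfolding linear_map_on_def by blast
  then have "L (0\<^sub>m q q) = 0 \<cdot>\<^sub>m L (0\<^sub>m q q) + 0 \<cdot>\<^sub>m L (0\<^sub>m q q)"
    unfolding Z [symmetric] .
  also have "\<dots> = 0\<^sub>m n n" using C by (intro eq_matI) auto
  finally show ?thesis .
qed

lemma linear_map_msum:
  assumes lin: "linear_map_on n q L" and F: "finite F"
    and X: "\<And>x. x \<in> F \<Longrightarrow> X x \<in> carrier_mat q q"
  shows "L (msum q q F (\<lambda>x. c x \<cdot>\<^sub>m X x)) = msum n n F (\<lambda>x. c x \<cdot>\<^sub>m L (X x))"
  using F X
proof (induction F rule: finite_induct)
  case empty
  have "msum q q {} (\<lambda>x. c x \<cdot>\<^sub>m X x) = 0\<^sub>m q q" "msum n n {} (\<lambda>x. c x \<cdot>\<^sub>m L (X x)) = 0\<^sub>m n n"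
    by (auto intro: eq_matI)
  then show ?case using linear_map_zero[OF lin] by simp
next
  case (insert x F)
  have LX: "\<And>y. y \<in> insert x F \<Longrightarrow> L (X y) \<in> carrier_mat n n"
    using insert lin unfolding linear_map_on_def by auto
  have "msum q q (insert x F) (\<lambda>x. c x \<cdot>\<^sub>m X x) = c x \<cdot>\<^sub>m X x + 1 \<cdot>\<^sub>m msum q q F (\<lambda>x. c x \<cdot>\<^sub>m X x)"
    using insert by (intro eq_matI) (auto simp: sum.insert)
  then have "L (msum q q (insert x F) (\<lambda>x. c x \<cdot>\<^sub>m X x))
      = c x \<cdot>\<^sub>m L (X x) + 1 \<cdot>\<^sub>m L (msum q q F (\<lambda>x. c x \<cdot>\<^sub>m X x))"
    using lin insert.prems unfolding linear_map_on_def by simp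
  also have "\<dots> = c x \<cdot>\<^sub>m L (X x) + 1 \<cdot>\<^sub>m msum n n F (\<lambda>x. c x \<cdot>\<^sub>m L (X x))"
    using insert by simp
  also have "\<dots> = msum n n (insert x F) (\<lambda>x. c x \<cdot>\<^sub>m L (X x))"
    using insert LX by (intro eq_matI) (auto simp: sum.insert)
  finally show ?case .
qed

lemma linear_map_eq_block_action:
  assumes lin: "linear_map_on n q L" and V: "V \<in> carrier_mat q q"
  shows "L V = block_action n q (mblock L n q) V"
proof -
  let ?P = "{..<q} \<times> {..<q}"
  have LE: "\<And>p. L (munit q (fst p) (snd p)) \<in> carrier_mat n n"
    using lin munit_carrier unfolding linear_map_on_def by auto
  have "V = msum q q ?P (\<lambda>p. V $$ p \<cdot>\<^sub>m munit q (fst p) (snd p))"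
  proof (rule eq_matI)
    fix a b assume "a < dim_row (msum q q ?P (\<lambda>p. V $$ p \<cdot>\<^sub>m munit q (fst p) (snd p)))"
      "b < dim_col (msum q q ?P (\<lambda>p. V $$ p \<cdot>\<^sub>m munit q (fst p) (snd p)))"
    then have ab: "a < q" "b < q" by auto
    have "msum q q ?P (\<lambda>p. V $$ p \<cdot>\<^sub>m munit q (fst p) (snd p)) $$ (a, b)
        = (\<Sum>p\<in>?P. V $$ p * munit q (fst p) (snd p) $$ (a, b))"
      using ab munit_carrier by (intro index_msum_smult) auto
    also have "\<dots> = (\<Sum>p\<in>?P. if p = (a, b) then V $$ (a, b) else 0)"
      using ab by (intro sum.cong refl) (auto simp: index_munit)
    also have "\<dots> = V $$ (a, b)" using ab by (simp add: sum.delta')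
    finally show "V $$ (a, b) = msum q q ?P (\<lambda>p. V $$ p \<cdot>\<^sub>m munit q (fst p) (snd p)) $$ (a, b)"
      by simp
  qed (use V in auto)
  then have "L V = msum n n ?P (\<lambda>p. V $$ p \<cdot>\<^sub>m L (munit q (fst p) (snd p)))"
    using linear_map_msum[OF lin, of ?P "\<lambda>p. munit q (fst p) (snd p)" "\<lambda>p. V $$ p"] munit_carrier
    by auto
  also have "\<dots> = block_action n q (mblock L n q) V"
  proof (rule eq_matI)
    fix a i assume "a < dim_row (block_action n q (mblock L n q) V)"
      "i < dim_col (block_action n q (mblock L n q) V)"
    then have ai: "a < n" "i < n" unfolding block_action_def by auto
    have "msum n n ?P (\<lambda>p. V $$ p \<cdot>\<^sub>m L (munit q (fst p) (snd p))) $$ (a, i)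
        = (\<Sum>p\<in>?P. V $$ p * L (munit q (fst p) (snd p)) $$ (a, i))"
      using ai LE by (intro index_msum_smult) auto
    also have "\<dots> = (\<Sum>b<q. \<Sum>j<q. V $$ (b, j) * L (munit q b j) $$ (a, i))"
      by (simp add: sum.cartesian_product split_beta)
    also have "\<dots> = block_action n q (mblock L n q) V $$ (a, i)"
      unfolding block_action_def using ai by (auto simp: index_mblock intro!: sum.cong)
    finally show "msum n n ?P (\<lambda>p. V $$ p \<cdot>\<^sub>m L (munit q (fst p) (snd p))) $$ (a, i)
      = block_action n q (mblock L n q) V $$ (a, i)" .
  qed (auto simp: block_action_def)
  finally show ?thesis .
qed

lemma sum_reverse4: "(\<Sum>k\<in>K. \<Sum>l\<in>L. \<Sum>j\<in>J. \<Sum>b\<in>B. f k l j b) = (\<Sum>b\<in>B. \<Sum>j\<in>J. \<Sum>l\<in>L. \<Sum>k\<in>K. f k l j b)"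
proof -
  have "(\<Sum>k\<in>K. \<Sum>l\<in>L. \<Sum>j\<in>J. \<Sum>b\<in>B. f k l j b) = (\<Sum>l\<in>L. \<Sum>k\<in>K. \<Sum>j\<in>J. \<Sum>b\<in>B. f k l j b)"
    by (rule sum.swap)
  also have "\<dots> = (\<Sum>l\<in>L. \<Sum>j\<in>J. \<Sum>k\<in>K. \<Sum>b\<in>B. f k l j b)"
    by (rule sum.cong[OF refl], rule sum.swap)
  also have "\<dots> = (\<Sum>j\<in>J. \<Sum>l\<in>L. \<Sum>k\<in>K. \<Sum>b\<in>B. f k l j b)"
    by (rule sum.swap)
  also have "\<dots> = (\<Sum>j\<in>J. \<Sum>l\<in>L. \<Sum>b\<in>B. \<Sum>k\<in>K. f k l j b)"
    by (intro sum.cong refl sum.swap)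
  also have "\<dots> = (\<Sum>j\<in>J. \<Sum>b\<in>B. \<Sum>l\<in>L. \<Sum>k\<in>K. f k l j b)"
    by (intro sum.cong refl sum.swap)
  also have "\<dots> = (\<Sum>b\<in>B. \<Sum>j\<in>J. \<Sum>l\<in>L. \<Sum>k\<in>K. f k l j b)"
    by (rule sum.swap)
  finally show ?thesis .
qed

lemma sum_swap3: "(\<Sum>i\<in>I. \<Sum>j\<in>J. \<Sum>l\<in>K. f i j l) = (\<Sum>l\<in>K. \<Sum>i\<in>I. \<Sum>j\<in>J. f i j l)"
proof -
  have "(\<Sum>i\<in>I. \<Sum>j\<in>J. \<Sum>l\<in>K. f i j l) = (\<Sum>i\<in>I. \<Sum>l\<in>K. \<Sum>j\<in>J. f i j l)"
    by (rule sum.cong[OF refl], rule sum.swap)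
  also have "\<dots> = (\<Sum>l\<in>K. \<Sum>i\<in>I. \<Sum>j\<in>J. f i j l)" by (rule sum.swap)
  finally show ?thesis .
qed

definition hill_blocks ::
    "nat \<Rightarrow> nat \<Rightarrow> nat \<Rightarrow> (nat \<Rightarrow> 'a::conjugatable_field mat) \<Rightarrow> 'a mat \<Rightarrow> nat \<Rightarrow> nat \<Rightarrow> 'a mat" where
  "hill_blocks n q m A H i j =
     msum n q {..<m} (\<lambda>l. (\<Sum>k<m. H $$ (k, l) * conjugate (A k $$ (i, j))) \<cdot>\<^sub>m A l)"

lemma hill_sum_eq_block_action:
  assumes A: "\<And>k. k < m \<Longrightarrow> A k \<in> carrier_mat n q" and V: "V \<in> carrier_mat q q"
  shows "msum n n ({..<m} \<times> {..<m}) (\<lambda>(k, l). H $$ (k, l) \<cdot>\<^sub>m (A l * V * madj (A k)))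
       = block_action n q (hill_blocks n q m A H) V"
proof (rule eq_matI)
  fix a i assume "a < dim_row (block_action n q (hill_blocks n q m A H) V)"
    "i < dim_col (block_action n q (hill_blocks n q m A H) V)"
  then have ai: "a < n" "i < n" unfolding block_action_def by auto
  have prod: "(A l * V * madj (A k)) $$ (a, i)
      = (\<Sum>j<q. \<Sum>b<q. A l $$ (a, b) * V $$ (b, j) * conjugate (A k $$ (i, j)))"
    if "k < m" "l < m" for k l
  proof -
    have AV: "A l * V \<in> carrier_mat n q" using A[OF that(2)] V by auto
    have "(A l * V * madj (A k)) $$ (a, i) = (\<Sum>j<q. (A l * V) $$ (a, j) * madj (A k) $$ (j, i))"
      by (rule index_mult_mat_sum[OF AV madj_carrier[OF A[OF that(1)]] ai])
    also have "\<dots> = (\<Sum>j<q. (\<Sum>b<q. A l $$ (a, b) * V $$ (b, j)) * conjugate (A k $$ (i, j)))"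
      using ai by (intro sum.cong refl)
        (simp add: index_mult_mat_sum[OF A[OF that(2)] V] index_madj[OF A[OF that(1)]])
    finally show ?thesis by (simp add: sum_distrib_right)
  qed
  have "msum n n ({..<m} \<times> {..<m}) (\<lambda>(k, l). H $$ (k, l) \<cdot>\<^sub>m (A l * V * madj (A k))) $$ (a, i)
      = (\<Sum>p\<in>{..<m} \<times> {..<m}. H $$ p * (A (snd p) * V * madj (A (fst p))) $$ (a, i))"
    unfolding index_msum[OF ai]
  proof (intro sum.cong refl)
    fix p assume "p \<in> {..<m} \<times> {..<m}"
    then have "A (snd p) \<in> carrier_mat n q" "A (fst p) \<in> carrier_mat n q" using A by auto
    then have "dim_row (A (snd p) * V * madj (A (fst p))) = n"
      "dim_col (A (snd p) * V * madj (A (fst p))) = n"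
      by (simp_all add: madj_def)
    then show "(case p of (k, l) \<Rightarrow> H $$ (k, l) \<cdot>\<^sub>m (A l * V * madj (A k))) $$ (a, i)
      = H $$ p * (A (snd p) * V * madj (A (fst p))) $$ (a, i)"
      using ai by (simp add: split_beta)
  qed
  also have "\<dots> = (\<Sum>k<m. \<Sum>l<m. H $$ (k, l) * (A l * V * madj (A k)) $$ (a, i))"
    by (simp add: sum.cartesian_product split_beta)
  also have "\<dots> = (\<Sum>k<m. \<Sum>l<m. \<Sum>j<q. \<Sum>b<q.
      H $$ (k, l) * A l $$ (a, b) * V $$ (b, j) * conjugate (A k $$ (i, j)))"
    by (intro sum.cong refl) (simp add: prod sum_distrib_left mult_ac)
  also have "\<dots> = (\<Sum>b<q. \<Sum>j<q. \<Sum>l<m. \<Sum>k<m.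
      H $$ (k, l) * A l $$ (a, b) * V $$ (b, j) * conjugate (A k $$ (i, j)))"
    by (rule sum_reverse4)
  also have "\<dots> = (\<Sum>b<q. \<Sum>j<q. V $$ (b, j) * hill_blocks n q m A H i j $$ (a, b))"
  proof (intro sum.cong refl)
    fix b j assume "b \<in> {..<q}" "j \<in> {..<q}"
    then show "(\<Sum>l<m. \<Sum>k<m. H $$ (k, l) * A l $$ (a, b) * V $$ (b, j) * conjugate (A k $$ (i, j)))
      = V $$ (b, j) * hill_blocks n q m A H i j $$ (a, b)"
      unfolding hill_blocks_def using A ai
      by (subst index_msum_smult) (auto simp: sum_distrib_left sum_distrib_right mult_ac)
  qed
  also have "\<dots> = block_action n q (hill_blocks n q m A H) V $$ (a, i)"
    unfolding block_action_def using ai by simp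
  finally show "msum n n ({..<m} \<times> {..<m}) (\<lambda>(k, l). H $$ (k, l) \<cdot>\<^sub>m (A l * V * madj (A k))) $$ (a, i)
    = block_action n q (hill_blocks n q m A H) V $$ (a, i)" .
qed (auto simp: block_action_def)

lemma hill_rep_iff_hill_blocks:
  assumes lin: "linear_map_on n q L" and A: "\<And>k. k < m \<Longrightarrow> A k \<in> carrier_mat n q"
    and H: "H \<in> carrier_mat m m"
  shows "hill_rep L n q m A H \<longleftrightarrow> (\<forall>i<n. \<forall>j<q. mblock L n q i j = hill_blocks n q m A H i j)"
proof
  assume "hill_rep L n q m A H"
  then have rep: "L V = block_action n q (hill_blocks n q m A H) V" if "V \<in> carrier_mat q q" for V
    using hill_sum_eq_block_action[OF A that] that unfolding hill_rep_def by auto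
  show "\<forall>i<n. \<forall>j<q. mblock L n q i j = hill_blocks n q m A H i j"
  proof (intro allI impI eq_matI)
    fix i j a b assume ij: "i < n" "j < q" and "a < dim_row (hill_blocks n q m A H i j)"
      "b < dim_col (hill_blocks n q m A H i j)"
    then have ab: "a < n" "b < q" unfolding hill_blocks_def by auto
    have "mblock L n q i j $$ (a, b) = L (munit q b j) $$ (a, i)"
      by (rule index_mblock[OF ij ab])
    also have "\<dots> = hill_blocks n q m A H i j $$ (a, b)"
      using rep[OF munit_carrier] ij ab by (simp add: index_block_action_munit)
    finally show "mblock L n q i j $$ (a, b) = hill_blocks n q m A H i j $$ (a, b)" .
  qed (auto simp: mblock_def hill_blocks_def)
next
  assume "\<forall>i<n. \<forall>j<q. mblock L n q i j = hill_blocks n q m A H i j"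
  then have "L V = msum n n ({..<m} \<times> {..<m}) (\<lambda>(k, l). H $$ (k, l) \<cdot>\<^sub>m (A l * V * madj (A k)))"
    if "V \<in> carrier_mat q q" for V
    using linear_map_eq_block_action[OF lin that] hill_sum_eq_block_action[OF A that]
      block_action_cong[of n q "mblock L n q" "hill_blocks n q m A H"] by auto
  then show "hill_rep L n q m A H"
    unfolding hill_rep_def using A H by blast
qed

lemma mblocks_subset_mspan_of_hill_rep:
  assumes lin: "linear_map_on n q L" and hr: "hill_rep L n q m A H"
  shows "mblocks L n q \<subseteq> mspan n q (A ` {..<m})"
proof
  have A: "\<And>k. k < m \<Longrightarrow> A k \<in> carrier_mat n q" and H: "H \<in> carrier_mat m m"
    using hr unfolding hill_rep_def by auto
  fix X assume "X \<in> mblocks L n q"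
  then obtain i j where "i < n" "j < q" "X = mblock L n q i j" unfolding mblocks_def by auto
  then have "X = hill_blocks n q m A H i j" using hill_rep_iff_hill_blocks[OF lin A H] hr by auto
  then show "X \<in> mspan n q (A ` {..<m})"
    unfolding hill_blocks_def
    using A msum_in_mspan[of "{..<m}" A n q "\<lambda>l. \<Sum>k<m. H $$ (k, l) * conjugate (A k $$ (i, j))"]
    by simp
qed

lemma set_cols_choi: "set (cols (choi L n q)) = vectorize n q ` mblocks L n q"
proof -
  have col: "col (choi L n q) c = vectorize n q (mblock L n q (c mod n) (c div n))"
    if c: "c < q * n" for c
  proof (rule eq_vecI)
    show "dim_vec (col (choi L n q) c) = dim_vec (vectorize n q (mblock L n q (c mod n) (c div n)))"
      by (simp add: choi_def vectorize_def)
    fix r assume "r < dim_vec (vectorize n q (mblock L n q (c mod n) (c div n)))"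
    then have r: "r < q * n" by (simp add: vectorize_def)
    show "col (choi L n q) c $ r = vectorize n q (mblock L n q (c mod n) (c div n)) $ r"
      using r c mod_div_less_of_less_mult[OF r] mod_div_less_of_less_mult[OF c]
      by (simp add: choi_def vectorize_def index_mblock)
  qed
  have "set (cols (choi L n q)) = col (choi L n q) ` {..<q * n}"
    unfolding cols_def by (auto simp: choi_def)
  also have "\<dots> = vectorize n q ` mblocks L n q"
  proof (intro equalityI subsetI)
    fix v assume "v \<in> col (choi L n q) ` {..<q * n}"
    then obtain c where c: "c < q * n" "v = col (choi L n q) c" by auto
    then show "v \<in> vectorize n q ` mblocks L n q"
      using col[OF c(1)] mod_div_less_of_less_mult[OF c(1)] unfolding mblocks_def by blast
  next
    fix v assume "v \<in> vectorize n q ` mblocks L n q"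
    then obtain i j where ij: "i < n" "j < q" "v = vectorize n q (mblock L n q i j)"
      unfolding mblocks_def by blast
    then have "v = col (choi L n q) (j * n + i)"
      using col[OF mult_add_less_mult[OF ij(2,1)]] by simp
    then show "v \<in> col (choi L n q) ` {..<q * n}"
      using mult_add_less_mult[OF ij(2,1)] by blast
  qed
  finally show ?thesis .
qed

lemma choi_vectorized_columns: "vectorized_columns n q (mblocks L n q) (choi L n q) (q * n)"
proof
  show "choi L n q \<in> carrier_mat (q * n) (q * n)" by (simp add: choi_def)
qed (simp_all add: mblocks_carrier set_cols_choi)

lemma rank_choi_le_of_hill_rep:
  assumes lin: "linear_map_on n q L" and hr: "hill_rep L n q m A H"
  shows "vec_space.rank (q * n) (choi L n q) \<le> m"
proof -
  interpret choi: vectorized_columns n q "mblocks L n q" "choi L n q" "q * n"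
    by (rule choi_vectorized_columns)
  have "A ` {..<m} \<subseteq> carrier_mat n q" using hr unfolding hill_rep_def by auto
  then have "vec_space.rank (q * n) (choi L n q) \<le> card (A ` {..<m})"
    by (intro choi.rank_le_card_of_mspan mblocks_subset_mspan_of_hill_rep[OF lin hr]) simp
  also have "\<dots> \<le> m" using card_image_le[of "{..<m}" A] by simp
  finally show ?thesis .
qed

lemma mspan_eq_mblocks_of_minimal_hill_rep:
  assumes lin: "linear_map_on n q L"
    and m: "m = vec_space.rank (q * n) (choi L n q)"
    and min: "minimal_hill_rep L n q m A H"
  shows "mspan n q (A ` {..<m}) = mspan n q (mblocks L n q)"
proof -
  interpret choi: vectorized_columns n q "mblocks L n q" "choi L n q" "q * n"
    by (rule choi_vectorized_columns)
  have hr: "hill_rep L n q m A H" using min unfolding minimal_hill_rep_def by auto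
  then show ?thesis
    using choi.mspan_eq_of_spanning_family mblocks_subset_mspan_of_hill_rep[OF lin hr] m
    unfolding hill_rep_def by auto
qed

lemma mblock_conjugate_swap:
  assumes lin: "linear_map_on n q L" and star: "star_linear q L"
    and "i < n" "a < n" "j < q" "b < q"
  shows "mblock L n q i j $$ (a, b) = conjugate (mblock L n q a b $$ (i, j))"
proof -
  have "madj (munit q b j) = (munit q j b :: 'a mat)"
    by (intro eq_matI) (auto simp: madj_def munit_def conjugate_one)
  moreover have "L (madj (munit q b j)) = madj (L (munit q b j))"
    using star munit_carrier[of q b j] unfolding star_linear_def by blast
  ultimately have "L (munit q j b) = madj (L (munit q b j))" by simp
  moreover have "L (munit q b j) \<in> carrier_mat n n"
    using lin munit_carrier unfolding linear_map_on_def by auto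
  ultimately show ?thesis
    using assms by (simp add: index_mblock index_madj)
qed

section \<open>Minimal Hill representations from a basis of the span of the blocks\<close>

locale hill_basis =
  fixes L :: "'a::conjugatable_field mat \<Rightarrow> 'a mat" and n q m :: nat and A :: "nat \<Rightarrow> 'a mat"
  assumes linear: "linear_map_on n q L" and star: "star_linear q L"
    and m_rank: "m = vec_space.rank (q * n) (choi L n q)"
    and A_carrier: "\<And>k. k < m \<Longrightarrow> A k \<in> carrier_mat n q"
    and mspan_A: "mspan n q (A ` {..<m}) = mspan n q (mblocks L n q)"
begin

lemma choi_columns: "vectorized_columns n q (mblocks L n q) (choi L n q) (q * n)"
  by (rule choi_vectorized_columns)

lemma mblocks_subset_mspan_A: "mblocks L n q \<subseteq> mspan n q (A ` {..<m})"
  using subset_mspan[OF mblocks_carrier] mspan_A by simp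

lemma coeffs_unique:
  assumes "msum n q {..<m} (\<lambda>k. c k \<cdot>\<^sub>m A k) = msum n q {..<m} (\<lambda>k. d k \<cdot>\<^sub>m A k)" "k < m"
  shows "c k = d k"
  by (rule vectorized_columns.msum_coeffs_unique[OF choi_columns, folded m_rank,
        OF A_carrier mblocks_subset_mspan_A assms])

lemma mblock_coeffs_exist:
  "\<exists>lam. \<forall>i<n. \<forall>j<q. mblock L n q i j = msum n q {..<m} (\<lambda>k. lam i j k \<cdot>\<^sub>m A k)"
proof -
  have "\<exists>c. mblock L n q i j = msum n q {..<m} (\<lambda>k. c k \<cdot>\<^sub>m A k)" if "i < n" "j < q" for i j
  proof -
    have "mblock L n q i j \<in> mspan n q (A ` {..<m})"
      using mblocks_subset_mspan_A that unfolding mblocks_def by blast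
    then obtain c where "mblock L n q i j = msum n q {..<m} (\<lambda>k. c k \<cdot>\<^sub>m A k)"
      by (rule mspan_image_msum[rotated 2]) (auto simp: A_carrier)
    then show ?thesis by (rule exI[of _ c])
  qed
  then have "\<forall>p\<in>{..<n} \<times> {..<q}.
      \<exists>c. mblock L n q (fst p) (snd p) = msum n q {..<m} (\<lambda>k. c k \<cdot>\<^sub>m A k)"
    by auto
  then obtain f where "\<forall>p\<in>{..<n} \<times> {..<q}.
      mblock L n q (fst p) (snd p) = msum n q {..<m} (\<lambda>k. f p k \<cdot>\<^sub>m A k)"
    by (rule bchoice[THEN exE])
  then show ?thesis by (intro exI[of _ "\<lambda>i j. f (i, j)"]) auto
qed

lemma mblock_coeffs_unique:
  assumes "\<forall>i<n. \<forall>j<q. mblock L n q i j = msum n q {..<m} (\<lambda>k. lam i j k \<cdot>\<^sub>m A k)"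
    and "\<forall>i<n. \<forall>j<q. mblock L n q i j = msum n q {..<m} (\<lambda>k. lam' i j k \<cdot>\<^sub>m A k)"
    and "i < n" "j < q" "k < m"
  shows "lam i j k = lam' i j k"
  using assms coeffs_unique[of "lam i j" "lam' i j" k] by simp

lemma minimal_hill_rep_of_hill_rep: "hill_rep L n q m A H \<Longrightarrow> minimal_hill_rep L n q m A H"
  unfolding minimal_hill_rep_def using rank_choi_le_of_hill_rep[OF linear] m_rank by auto

end

locale hill_coefficients = hill_basis +
  fixes lam :: "nat \<Rightarrow> nat \<Rightarrow> nat \<Rightarrow> 'a::conjugatable_field"
  assumes mblock_eq_msum_lam:
    "\<And>i j. i < n \<Longrightarrow> j < q \<Longrightarrow> mblock L n q i j = msum n q {..<m} (\<lambda>k. lam i j k \<cdot>\<^sub>m A k)"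
begin

abbreviation conj_coeff_mat :: "nat \<Rightarrow> 'a mat" where
  "conj_coeff_mat k \<equiv> mat n q (\<lambda>(i, j). conjugate (lam i j k))"

lemma index_mblock_lam:
  assumes "i < n" "j < q" "a < n" "b < q"
  shows "mblock L n q i j $$ (a, b) = (\<Sum>l<m. lam i j l * A l $$ (a, b))"
proof -
  have "mblock L n q i j $$ (a, b) = msum n q {..<m} (\<lambda>k. lam i j k \<cdot>\<^sub>m A k) $$ (a, b)"
    using mblock_eq_msum_lam assms by simp
  also have "\<dots> = (\<Sum>l<m. lam i j l * A l $$ (a, b))"
    using assms A_carrier by (intro index_msum_smult) auto
  finally show ?thesis .
qed

text \<open>Star-linearity gives \<open>L\<^sub>i\<^sub>j(a,b) = conj (L\<^sub>a\<^sub>b(i,j))\<close>, so the coefficients of the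
  blocks in the basis \<open>A\<^sub>k\<close> become the entries of the \<open>L\<^sub>k\<close>.\<close>

lemma mblock_eq_msum_conj_coeff_mat:
  assumes ij: "i < n" "j < q"
  shows "mblock L n q i j = msum n q {..<m} (\<lambda>k. conjugate (A k $$ (i, j)) \<cdot>\<^sub>m conj_coeff_mat k)"
proof (rule eq_matI)
  fix a b assume "a < dim_row (msum n q {..<m} (\<lambda>k. conjugate (A k $$ (i, j)) \<cdot>\<^sub>m conj_coeff_mat k))"
    "b < dim_col (msum n q {..<m} (\<lambda>k. conjugate (A k $$ (i, j)) \<cdot>\<^sub>m conj_coeff_mat k))"
  then have ab: "a < n" "b < q" by auto
  have "mblock L n q i j $$ (a, b) = conjugate (\<Sum>k<m. lam a b k * A k $$ (i, j))"
    using mblock_conjugate_swap[OF linear star ij(1) ab(1) ij(2) ab(2)] index_mblock_lam[OF ab ij]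
    by simp
  also have "\<dots> = (\<Sum>k<m. conjugate (A k $$ (i, j)) * conjugate (lam a b k))"
    by (simp add: sum_conjugate conjugate_dist_mul mult.commute)
  also have "\<dots> = msum n q {..<m} (\<lambda>k. conjugate (A k $$ (i, j)) \<cdot>\<^sub>m conj_coeff_mat k) $$ (a, b)"
    using ab by simp
  finally show "mblock L n q i j $$ (a, b)
    = msum n q {..<m} (\<lambda>k. conjugate (A k $$ (i, j)) \<cdot>\<^sub>m conj_coeff_mat k) $$ (a, b)" .
qed (auto simp: mblock_def)

lemma mblocks_subset_mspan_conj_coeff_mat: "mblocks L n q \<subseteq> mspan n q (conj_coeff_mat ` {..<m})"
proof
  fix X assume "X \<in> mblocks L n q"
  then obtain i j where ij: "i < n" "j < q" and X: "X = mblock L n q i j"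
    unfolding mblocks_def by blast
  show "X \<in> mspan n q (conj_coeff_mat ` {..<m})"
    unfolding X mblock_eq_msum_conj_coeff_mat[OF ij] by (rule msum_in_mspan) auto
qed

lemma mspan_conj_coeff_mat: "mspan n q (conj_coeff_mat ` {..<m}) = mspan n q (mblocks L n q)"
  by (rule vectorized_columns.mspan_eq_of_spanning_family[OF choi_columns, folded m_rank])
    (simp_all add: mblocks_subset_mspan_conj_coeff_mat)

lemma conj_coeff_mat_coeffs_unique:
  assumes "\<forall>i<n. \<forall>j<q. mblock L n q i j = msum n q {..<m} (\<lambda>k. alpha i j k \<cdot>\<^sub>m conj_coeff_mat k)"
    and ijk: "i < n" "j < q" "k < m"
  shows "alpha i j k = conjugate (A k $$ (i, j))"
proof -
  have "mblock L n q i j = msum n q {..<m} (\<lambda>k. alpha i j k \<cdot>\<^sub>m conj_coeff_mat k)"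
    using assms ijk by blast
  then have eq: "msum n q {..<m} (\<lambda>k. alpha i j k \<cdot>\<^sub>m conj_coeff_mat k)
      = msum n q {..<m} (\<lambda>k. conjugate (A k $$ (i, j)) \<cdot>\<^sub>m conj_coeff_mat k)"
    using mblock_eq_msum_conj_coeff_mat[OF ijk(1,2)] by (rule subst)
  show ?thesis
    by (rule vectorized_columns.msum_coeffs_unique[OF choi_columns, folded m_rank,
          OF _ mblocks_subset_mspan_conj_coeff_mat eq ijk(3)]) simp
qed

lemma mblock_coeffs_exist_conj_coeff_mat:
  "\<exists>beta. \<forall>k<m. conj_coeff_mat k
     = msum n q ({..<n} \<times> {..<q}) (\<lambda>(i, j). beta k i j \<cdot>\<^sub>m mblock L n q i j)"
proof -
  have "\<forall>k\<in>{..<m}. \<exists>c. conj_coeff_mat k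
      = msum n q ({..<n} \<times> {..<q}) (\<lambda>p. c p \<cdot>\<^sub>m (\<lambda>(i, j). mblock L n q i j) p)"
  proof
    fix k assume k: "k \<in> {..<m}"
    have "conj_coeff_mat ` {..<m} \<subseteq> carrier_mat n q" by auto
    then have "conj_coeff_mat k \<in> mspan n q (conj_coeff_mat ` {..<m})"
      using subset_mspan k by blast
    then have "conj_coeff_mat k \<in> mspan n q ((\<lambda>(i, j). mblock L n q i j) ` ({..<n} \<times> {..<q}))"
      unfolding mspan_conj_coeff_mat mblocks_eq_image .
    then obtain c where
      "conj_coeff_mat k = msum n q ({..<n} \<times> {..<q}) (\<lambda>p. c p \<cdot>\<^sub>m (\<lambda>(i, j). mblock L n q i j) p)"
      by (rule mspan_image_msum[rotated 2]) (auto simp: mblock_carrier)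
    then show "\<exists>c. conj_coeff_mat k
      = msum n q ({..<n} \<times> {..<q}) (\<lambda>p. c p \<cdot>\<^sub>m (\<lambda>(i, j). mblock L n q i j) p)"
      by (rule exI[of _ c])
  qed
  then obtain c where c: "\<forall>k\<in>{..<m}. conj_coeff_mat k
      = msum n q ({..<n} \<times> {..<q}) (\<lambda>p. c k p \<cdot>\<^sub>m (\<lambda>(i, j). mblock L n q i j) p)"
    by (rule bchoice[THEN exE])
  show ?thesis
  proof (intro exI[of _ "\<lambda>k i j. c k (i, j)"] allI impI)
    fix k assume "k < m"
    then show "conj_coeff_mat k
      = msum n q ({..<n} \<times> {..<q}) (\<lambda>(i, j). c k (i, j) \<cdot>\<^sub>m mblock L n q i j)"
      using c by (simp add: case_prod_beta')
  qed
qed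

context
  fixes H :: "'a mat"
  assumes H_carrier: "H \<in> carrier_mat m m"
    and conj_coeff_mat_eq: "\<And>k. k < m \<Longrightarrow> conj_coeff_mat k = msum n q {..<m} (\<lambda>l. H $$ (k, l) \<cdot>\<^sub>m A l)"
begin

lemma conjugate_lam_eq:
  assumes "k < m" "a < n" "b < q"
  shows "conjugate (lam a b k) = (\<Sum>l<m. H $$ (k, l) * A l $$ (a, b))"
proof -
  have "conjugate (lam a b k) = conj_coeff_mat k $$ (a, b)" using assms by simp
  also have "\<dots> = msum n q {..<m} (\<lambda>l. H $$ (k, l) \<cdot>\<^sub>m A l) $$ (a, b)"
    by (simp only: conj_coeff_mat_eq[OF assms(1)])
  also have "\<dots> = (\<Sum>l<m. H $$ (k, l) * A l $$ (a, b))"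
    using assms A_carrier by (intro index_msum_smult) auto
  finally show ?thesis .
qed

lemma mblock_eq_hill_blocks:
  assumes ij: "i < n" "j < q"
  shows "mblock L n q i j = hill_blocks n q m A H i j"
proof (rule eq_matI)
  fix a b assume "a < dim_row (hill_blocks n q m A H i j)" "b < dim_col (hill_blocks n q m A H i j)"
  then have ab: "a < n" "b < q" unfolding hill_blocks_def by auto
  have "mblock L n q i j $$ (a, b) = (\<Sum>k<m. conjugate (A k $$ (i, j)) * conjugate (lam a b k))"
    using mblock_eq_msum_conj_coeff_mat[OF ij] ab by simp
  also have "\<dots> = (\<Sum>k<m. conjugate (A k $$ (i, j)) * (\<Sum>l<m. H $$ (k, l) * A l $$ (a, b)))"
    using ab by (intro sum.cong refl) (simp add: conjugate_lam_eq)
  also have "\<dots> = (\<Sum>l<m. (\<Sum>k<m. H $$ (k, l) * conjugate (A k $$ (i, j))) * A l $$ (a, b))"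
    by (simp add: sum_distrib_left sum_distrib_right mult_ac) (rule sum.swap)
  also have "\<dots> = hill_blocks n q m A H i j $$ (a, b)"
    unfolding hill_blocks_def using ab A_carrier by (intro index_msum_smult[symmetric]) auto
  finally show "mblock L n q i j $$ (a, b) = hill_blocks n q m A H i j $$ (a, b)" .
qed (auto simp: mblock_def hill_blocks_def)

lemma hill_rep_of_conj_coeff_mat_eq: "hill_rep L n q m A H"
  using hill_rep_iff_hill_blocks[OF linear A_carrier H_carrier] mblock_eq_hill_blocks by auto

lemma lam_eq_hill_coeffs:
  "i < n \<Longrightarrow> j < q \<Longrightarrow> l < m \<Longrightarrow> lam i j l = (\<Sum>k<m. H $$ (k, l) * conjugate (A k $$ (i, j)))"
proof -
  assume ijl: "i < n" "j < q" "l < m"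
  then have "msum n q {..<m} (\<lambda>l. lam i j l \<cdot>\<^sub>m A l)
      = msum n q {..<m} (\<lambda>l. (\<Sum>k<m. H $$ (k, l) * conjugate (A k $$ (i, j))) \<cdot>\<^sub>m A l)"
    using mblock_eq_msum_lam[OF ijl(1,2)] mblock_eq_hill_blocks[OF ijl(1,2)]
    unfolding hill_blocks_def by metis
  from coeffs_unique[OF this ijl(3)] show ?thesis .
qed

text \<open>Both \<^term>\<open>H\<close> and its adjoint give the coefficients of \<open>L\<^sub>k\<close> in the basis \<open>A\<^sub>l\<close>.\<close>

lemma hermitian_of_conj_coeff_mat_eq: "hermitian_m H"
proof -
  have H_conj: "H $$ (k, l) = conjugate (H $$ (l, k))" if kl: "k < m" "l < m" for k l
  proof -
    have "msum n q {..<m} (\<lambda>l. H $$ (k, l) \<cdot>\<^sub>m A l) = msum n q {..<m} (\<lambda>l. conjugate (H $$ (l, k)) \<cdot>\<^sub>m A l)"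
    proof (rule eq_matI)
      fix a b assume "a < dim_row (msum n q {..<m} (\<lambda>l. conjugate (H $$ (l, k)) \<cdot>\<^sub>m A l))"
        "b < dim_col (msum n q {..<m} (\<lambda>l. conjugate (H $$ (l, k)) \<cdot>\<^sub>m A l))"
      then have ab: "a < n" "b < q" by auto
      have "msum n q {..<m} (\<lambda>l. H $$ (k, l) \<cdot>\<^sub>m A l) $$ (a, b) = (\<Sum>l<m. H $$ (k, l) * A l $$ (a, b))"
        using ab A_carrier by (intro index_msum_smult) auto
      also have "\<dots> = conjugate (lam a b k)"
        by (rule conjugate_lam_eq[OF kl(1) ab, symmetric])
      also have "\<dots> = (\<Sum>l<m. conjugate (H $$ (l, k)) * A l $$ (a, b))"
        by (simp add: lam_eq_hill_coeffs[OF ab kl(1)] sum_conjugate conjugate_dist_mul)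
      also have "\<dots> = msum n q {..<m} (\<lambda>l. conjugate (H $$ (l, k)) \<cdot>\<^sub>m A l) $$ (a, b)"
        using ab A_carrier by (intro index_msum_smult[symmetric]) auto
      finally show "msum n q {..<m} (\<lambda>l. H $$ (k, l) \<cdot>\<^sub>m A l) $$ (a, b)
        = msum n q {..<m} (\<lambda>l. conjugate (H $$ (l, k)) \<cdot>\<^sub>m A l) $$ (a, b)" .
    qed auto
    from coeffs_unique[OF this kl(2)] show ?thesis .
  qed
  show ?thesis
    unfolding hermitian_m_def
  proof (rule eq_matI)
    fix k l assume "k < dim_row H" "l < dim_col H"
    then have kl: "k < m" "l < m" using H_carrier by auto
    show "madj H $$ (k, l) = H $$ (k, l)"
      unfolding index_madj[OF H_carrier kl] H_conj[OF kl] ..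
  qed (use madj_carrier[OF H_carrier] H_carrier in auto)
qed

lemma vstack_conj_coeff_mat_eq: "vstack n q m conj_coeff_mat = kron H (1\<^sub>m n) * vstack n q m A"
proof (rule eq_matI)
  have K: "kron H (1\<^sub>m n) \<in> carrier_mat (m * n) (m * n)" using H_carrier unfolding kron_def by auto
  have V: "vstack n q m A \<in> carrier_mat (m * n) q" unfolding vstack_def by auto
  fix r c assume "r < dim_row (kron H (1\<^sub>m n) * vstack n q m A)" "c < dim_col (kron H (1\<^sub>m n) * vstack n q m A)"
  then have r: "r < m * n" and c: "c < q" using K V by auto
  have rb: "r mod n < n" "r div n < m" using mod_div_less_of_less_mult[OF r] by auto
  have "(kron H (1\<^sub>m n) * vstack n q m A) $$ (r, c)
      = (\<Sum>l<m. \<Sum>s<n. kron H (1\<^sub>m n) $$ (r, l * n + s) * vstack n q m A $$ (l * n + s, c))"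
    using index_mult_mat_sum[OF K V r c] by (simp add: sum_lessThan_mult)
  also have "\<dots> = (\<Sum>l<m. \<Sum>s<n. H $$ (r div n, l) * (if r mod n = s then 1 else 0) * A l $$ (s, c))"
  proof (intro sum.cong refl)
    fix l s assume ls: "l \<in> {..<m}" "s \<in> {..<n}"
    then have "l * n + s < m * n" "(l * n + s) div n = l" "(l * n + s) mod n = s"
      using mult_add_less_mult[of l m s n] by auto
    then show "kron H (1\<^sub>m n) $$ (r, l * n + s) * vstack n q m A $$ (l * n + s, c)
      = H $$ (r div n, l) * (if r mod n = s then 1 else 0) * A l $$ (s, c)"
      using H_carrier r c rb ls unfolding kron_def vstack_def by simp
  qed
  also have "\<dots> = (\<Sum>l<m. H $$ (r div n, l) * A l $$ (r mod n, c))"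
    using rb by (simp add: if_distrib[of "\<lambda>x. _ * x * _"] sum.delta cong: if_cong)
  also have "\<dots> = conj_coeff_mat (r div n) $$ (r mod n, c)"
    using rb c by (simp add: conjugate_lam_eq)
  also have "\<dots> = vstack n q m conj_coeff_mat $$ (r, c)"
    unfolding vstack_def using r c by simp
  finally show "vstack n q m conj_coeff_mat $$ (r, c) = (kron H (1\<^sub>m n) * vstack n q m A) $$ (r, c)"
    by simp
qed (use H_carrier in \<open>auto simp: vstack_def kron_def\<close>)

end

lemma index_hill_matrix:
  assumes "k < m" "l < m"
  shows "hill_matrix n q m (\<lambda>k. mat n q (\<lambda>(i, j). beta k i j)) conj_coeff_mat $$ (k, l)
    = (\<Sum>i<n. \<Sum>j<q. beta k i j * lam i j l)"
  using assms by (simp add: hill_matrix_def scalar_prod_def hadamard_def mconj_def ones_vec_def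
      conjugate_one atLeast0LessThan)

lemma conj_coeff_mat_eq_hill_matrix:
  assumes beta: "\<forall>k<m. conj_coeff_mat k
      = msum n q ({..<n} \<times> {..<q}) (\<lambda>(i, j). beta k i j \<cdot>\<^sub>m mblock L n q i j)"
    and k: "k < m"
  defines "H \<equiv> hill_matrix n q m (\<lambda>k. mat n q (\<lambda>(i, j). beta k i j)) conj_coeff_mat"
  shows "conj_coeff_mat k = msum n q {..<m} (\<lambda>l. H $$ (k, l) \<cdot>\<^sub>m A l)"
proof (rule eq_matI)
  fix a b assume "a < dim_row (msum n q {..<m} (\<lambda>l. H $$ (k, l) \<cdot>\<^sub>m A l))"
    "b < dim_col (msum n q {..<m} (\<lambda>l. H $$ (k, l) \<cdot>\<^sub>m A l))"
  then have ab: "a < n" "b < q" by auto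
  have "conj_coeff_mat k
      = msum n q ({..<n} \<times> {..<q}) (\<lambda>(i, j). beta k i j \<cdot>\<^sub>m mblock L n q i j)"
    using beta k by blast
  then have "conj_coeff_mat k $$ (a, b)
      = msum n q ({..<n} \<times> {..<q}) (\<lambda>(i, j). beta k i j \<cdot>\<^sub>m mblock L n q i j) $$ (a, b)"
    by (simp only:)
  also have "\<dots> = (\<Sum>i<n. \<Sum>j<q. beta k i j * mblock L n q i j $$ (a, b))"
    using ab by (simp add: sum.cartesian_product split_beta)
  also have "\<dots> = (\<Sum>i<n. \<Sum>j<q. \<Sum>l<m. beta k i j * lam i j l * A l $$ (a, b))"
    using ab by (intro sum.cong refl) (simp add: index_mblock_lam sum_distrib_left mult.assoc)
  also have "\<dots> = (\<Sum>l<m. \<Sum>i<n. \<Sum>j<q. beta k i j * lam i j l * A l $$ (a, b))"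
    by (rule sum_swap3)
  also have "\<dots> = (\<Sum>l<m. H $$ (k, l) * A l $$ (a, b))"
    using k unfolding H_def by (simp add: index_hill_matrix sum_distrib_right)
  also have "\<dots> = msum n q {..<m} (\<lambda>l. H $$ (k, l) \<cdot>\<^sub>m A l) $$ (a, b)"
    using ab A_carrier by (intro index_msum_smult[symmetric]) auto
  finally show "conj_coeff_mat k $$ (a, b) = msum n q {..<m} (\<lambda>l. H $$ (k, l) \<cdot>\<^sub>m A l) $$ (a, b)" .
qed auto

lemma hill_matrix_minimal_hill_rep:
  assumes "\<forall>k<m. conj_coeff_mat k
      = msum n q ({..<n} \<times> {..<q}) (\<lambda>(i, j). beta k i j \<cdot>\<^sub>m mblock L n q i j)"
  defines "H \<equiv> hill_matrix n q m (\<lambda>k. mat n q (\<lambda>(i, j). beta k i j)) conj_coeff_mat"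
  shows "hermitian_m H \<and> minimal_hill_rep L n q m A H \<and> vstack n q m conj_coeff_mat = kron H (1\<^sub>m n) * vstack n q m A"
proof -
  have H: "H \<in> carrier_mat m m" unfolding H_def hill_matrix_def by auto
  note eq = conj_coeff_mat_eq_hill_matrix[OF assms(1), folded H_def]
  show ?thesis
    using hermitian_of_conj_coeff_mat_eq[OF H eq] vstack_conj_coeff_mat_eq[OF H eq]
      minimal_hill_rep_of_hill_rep[OF hill_rep_of_conj_coeff_mat_eq[OF H eq]] by blast
qed

end

lemma (in hill_basis) exists_hermitian_minimal_hill_rep: "\<exists>H. hermitian_m H \<and> minimal_hill_rep L n q m A H"
proof -
  obtain lam where "\<forall>i<n. \<forall>j<q. mblock L n q i j = msum n q {..<m} (\<lambda>k. lam i j k \<cdot>\<^sub>m A k)"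
    using mblock_coeffs_exist by blast
  then interpret hill_coefficients L n q m A lam by unfold_locales auto
  obtain beta where "\<forall>k<m. conj_coeff_mat k
      = msum n q ({..<n} \<times> {..<q}) (\<lambda>(i, j). beta k i j \<cdot>\<^sub>m mblock L n q i j)"
    using mblock_coeffs_exist_conj_coeff_mat by blast
  from hill_matrix_minimal_hill_rep[OF this] show ?thesis by blast
qed

theorem theorem5p8:
  fixes L :: "'a::conjugatable_field mat \<Rightarrow> 'a mat" and n q m :: nat
  assumes lin: "linear_map_on n q L"
    and star: "star_linear q L"
    and m_def: "m = vec_space.rank (q*n) (choi L n q)"
  shows
   "(\<forall>A. (\<forall>k<m. A k \<in> carrier_mat n q) \<and> mspan n q (A ` {..<m}) = mspan n q (mblocks L n q) \<longrightarrow>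
      (\<exists>H. hermitian_m H \<and> minimal_hill_rep L n q m A H) \<and>
      (\<exists>lam. \<forall>i<n. \<forall>j<q. mblock L n q i j = msum n q {..<m} (\<lambda>k. lam i j k \<cdot>\<^sub>m A k)) \<and>
      (\<forall>lam lam'. (\<forall>i<n. \<forall>j<q. mblock L n q i j = msum n q {..<m} (\<lambda>k. lam i j k \<cdot>\<^sub>m A k)) \<longrightarrow>
                  (\<forall>i<n. \<forall>j<q. mblock L n q i j = msum n q {..<m} (\<lambda>k. lam' i j k \<cdot>\<^sub>m A k)) \<longrightarrow>
                  (\<forall>i<n. \<forall>j<q. \<forall>k<m. lam i j k = lam' i j k)) \<and>
      (\<forall>lam. (\<forall>i<n. \<forall>j<q. mblock L n q i j = msum n q {..<m} (\<lambda>k. lam i j k \<cdot>\<^sub>m A k)) \<longrightarrow>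
         (let Lk = (\<lambda>k. mat n q (\<lambda>(i,j). conjugate (lam i j k))) in
           mspan n q (Lk ` {..<m}) = mspan n q (mblocks L n q) \<and>
           (\<forall>i<n. \<forall>j<q. mblock L n q i j
                 = msum n q {..<m} (\<lambda>k. conjugate (A k $$ (i,j)) \<cdot>\<^sub>m Lk k)) \<and>
           (\<forall>alpha. (\<forall>i<n. \<forall>j<q. mblock L n q i j = msum n q {..<m} (\<lambda>k. alpha i j k \<cdot>\<^sub>m Lk k)) \<longrightarrow>
                (\<forall>i<n. \<forall>j<q. \<forall>k<m. alpha i j k = conjugate (A k $$ (i,j)))) \<and>
           (\<forall>beta. (\<forall>k<m. Lk k = msum n q ({..<n} \<times> {..<q})
                                     (\<lambda>(i,j). beta k i j \<cdot>\<^sub>m mblock L n q i j)) \<longrightarrow>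
                (let B = (\<lambda>k. mat n q (\<lambda>(i,j). beta k i j));
                     H = hill_matrix n q m B Lk in
                  hermitian_m H \<and> minimal_hill_rep L n q m A H \<and>
                  vstack n q m Lk = kron H (1\<^sub>m n) * vstack n q m A)))))
    \<and>
    (\<forall>A H. minimal_hill_rep L n q m A H \<longrightarrow> mspan n q (A ` {..<m}) = mspan n q (mblocks L n q))"
proof -
  have basis: "hill_basis L n q m A"
    if "\<forall>k<m. A k \<in> carrier_mat n q" "mspan n q (A ` {..<m}) = mspan n q (mblocks L n q)" for A
    using lin star m_def that by unfold_locales auto
  have coeffs: "hill_coefficients L n q m A lam"
    if "\<forall>k<m. A k \<in> carrier_mat n q" "mspan n q (A ` {..<m}) = mspan n q (mblocks L n q)"
      "\<forall>i<n. \<forall>j<q. mblock L n q i j = msum n q {..<m} (\<lambda>k. lam i j k \<cdot>\<^sub>m A k)" for A lam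
    using basis[OF that(1,2)] that(3) by (simp add: hill_coefficients_def hill_coefficients_axioms_def)
  show ?thesis
    unfolding Let_def
    apply (intro conjI allI impI; (elim conjE)?)
    subgoal by (rule hill_basis.exists_hermitian_minimal_hill_rep[OF basis])
    subgoal by (rule hill_basis.mblock_coeffs_exist[OF basis])
    subgoal for A lam lam' by (rule hill_basis.mblock_coeffs_unique[OF basis, where lam = lam and lam' = lam'])
    subgoal by (rule hill_coefficients.mspan_conj_coeff_mat[OF coeffs])
    subgoal by (rule hill_coefficients.mblock_eq_msum_conj_coeff_mat[OF coeffs])
    subgoal for A lam alpha
      by (rule hill_coefficients.conj_coeff_mat_coeffs_unique[OF coeffs, where alpha = alpha])
    subgoal for A lam beta using hill_coefficients.hill_matrix_minimal_hill_rep[OF coeffs, where beta = beta] by blast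
    subgoal for A lam beta using hill_coefficients.hill_matrix_minimal_hill_rep[OF coeffs, where beta = beta] by blast
    subgoal for A lam beta using hill_coefficients.hill_matrix_minimal_hill_rep[OF coeffs, where beta = beta] by blast
    subgoal by (rule mspan_eq_mblocks_of_minimal_hill_rep[OF lin m_def])
    done
qed

end
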